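(* For every $\varepsilon>0$ there exists $N$ such that for every $n\ge N$ the following holds: if $V$ is a set of $n$ vertices and $\mathcal{T}$ is a family (multiset, so repeated members are allowed and counted with multiplicity) of triangles on $V$ having no rainbow triangle, then $|\mathcal{T}|\le (1+\varepsilon)\frac{n^2}{8}$. Equivalently, $|\mathcal{T}|\le \frac{n^2}{8}(1+o(1))$ as $n\to\infty$.
   Context: A triangle on $V$ is a $3$-element subset $\{x,y,z\}\subseteq V$, identified with its edge set $\{\{x,y\},\{y,z\},\{x,z\}\}$. In a family (multiset) $\mathcal{T}$ of triangles, repeated copies of the same triangle are treated as different members. A rainbow triangle is a triangle $\{x,y,z\}$ on $V$ together with three distinct members $t_1,t_2,t_3$ of $\mathcal{T}$ (distinct as members of the multiset, though possibly equal as sets) such that $\{x,y\}$ is an edge of $t_1$, $\{y,z\}$ is an edge of $t_2$ and $\{x,z\}$ is an edge of $t_3$. *)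

theory Defs
  imports Complex_Main "HOL-Library.Multiset"
begin

text \<open>A triangle on V: a 3-element subset of V (identified with its edge set).\<close>
definition triangle_on :: "'a set \<Rightarrow> 'a set \<Rightarrow> bool" where
  "triangle_on V t \<longleftrightarrow> t \<subseteq> V \<and> card t = 3"

definition edge_of :: "'a set \<Rightarrow> 'a set \<Rightarrow> bool" where
  "edge_of e t \<longleftrightarrow> e \<subseteq> t \<and> card e = 2"

text \<open>A rainbow triangle in a multiset family T of triangles on V: a triangle {x,y,z} on V
  and three distinct members t1,t2,t3 of T (distinct as members of the multiset, i.e.
  the multiset {#t1,t2,t3#} is contained in T) with xy an edge of t1, yz of t2, xz of t3.\<close>
definition has_rainbow_triangle :: "'a set \<Rightarrow> 'a set multiset \<Rightarrow> bool" where
  "has_rainbow_triangle V T \<longleftrightarrow>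
     (\<exists>x y z t1 t2 t3. triangle_on V {x, y, z} \<and> {#t1, t2, t3#} \<subseteq># T \<and>
        edge_of {x, y} t1 \<and> edge_of {y, z} t2 \<and> edge_of {x, z} t3)"

end

theory Submission
  imports Defs "HOL-Library.Disjoint_Sets"
begin

(*
  Call an edge of a member S of T private if no other member contains it, and let G be the graph
  of all private edges. Rainbow-freeness gives: no triangle occurs three times; a triangle occurring
  twice has all its edges private; a member with two non-private edges would close a rainbow
  triangle with the two members containing them. So every member S contributes at least
  2 * count T S to |E(G)| + t(G), the triangles of G being exactly the members all of whose edges
  are private. Moreover every edge of G lies in at most one triangle of G.

  For such graphs 4 (|E| + t) <= n^2 + 4n, by induction: delete a triangle X (or an edge, if there
  is no triangle). Each remaining vertex has at most one neighbour in X, and the triangles meeting X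
  in a single vertex have pairwise disjoint pairs of vertices outside X, so at most n - |X| edges
  and (n - |X|) / 2 triangles are lost besides those inside X. Hence 8 |T| <= n^2 + 4n.
*)

definition graph_triangles :: "'a set set \<Rightarrow> 'a set \<Rightarrow> 'a set set" where
  "graph_triangles E V = {S. triangle_on V S \<and> (\<forall>e. edge_of e S \<longrightarrow> e \<in> E)}"

definition triangles_edge_disjoint :: "'a set set \<Rightarrow> 'a set \<Rightarrow> bool" where
  "triangles_edge_disjoint E V \<longleftrightarrow>
     (\<forall>e\<in>E. \<forall>S1\<in>graph_triangles E V. \<forall>S2\<in>graph_triangles E V. e \<subseteq> S1 \<longrightarrow> e \<subseteq> S2 \<longrightarrow> S1 = S2)"

lemma graph_triangles_restrict:
  assumes "W \<subseteq> V"
  shows "graph_triangles {e\<in>E. e \<subseteq> W} W = {S\<in>graph_triangles E V. S \<subseteq> W}"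
  using assms unfolding graph_triangles_def triangle_on_def edge_of_def by blast

lemma triangles_edge_disjoint_restrict:
  assumes "triangles_edge_disjoint E V" "W \<subseteq> V"
  shows "triangles_edge_disjoint {e\<in>E. e \<subseteq> W} W"
  using assms unfolding triangles_edge_disjoint_def graph_triangles_restrict[OF assms(2)] by blast

lemma graph_triangles_edge:
  "S \<in> graph_triangles E V \<Longrightarrow> x \<in> S \<Longrightarrow> y \<in> S \<Longrightarrow> x \<noteq> y \<Longrightarrow> {x, y} \<in> E"
  unfolding graph_triangles_def edge_of_def by simp

lemma finite_graph_triangles: "finite V \<Longrightarrow> finite (graph_triangles E V)"
  unfolding graph_triangles_def triangle_on_def by (auto intro: finite_subset[of _ "Pow V"])

lemma card_family_of_k_subsets_le:
  assumes "finite X" "\<And>A. A \<in> F \<Longrightarrow> A \<subseteq> X \<and> card A = k"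
  shows "card F \<le> card X choose k"
proof -
  have "card F \<le> card {A. A \<subseteq> X \<and> card A = k}"
    using assms by (intro card_mono) auto
  then show ?thesis
    using n_subsets[OF assms(1)] by simp
qed

lemma disjoint_family_card_le:
  assumes "finite W" "\<And>i. i \<in> I \<Longrightarrow> A i \<subseteq> W" "\<And>i. i \<in> I \<Longrightarrow> card (A i) = k"
    and "disjoint_family_on A I"
  shows "k * card I \<le> card W"
proof (cases "finite I")
  case True
  have "card (\<Union>i\<in>I. A i) = (\<Sum>i\<in>I. card (A i))"
    using assms True by (intro card_UN_disjoint') (auto intro: finite_subset)
  then have "k * card I = card (\<Union>i\<in>I. A i)"
    using assms(3) by simp
  also have "\<dots> \<le> card W"
    using assms by (intro card_mono) auto
  finally show ?thesis .
qed simp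

lemma edge_of_triple_cases:
  assumes "edge_of e {a, b, c}"
  shows "e = {a, b} \<or> e = {a, c} \<or> e = {b, c}"
proof -
  obtain x y where e: "e = {x, y}" "x \<noteq> y"
    using assms by (auto simp: edge_of_def card_2_iff)
  moreover have "x \<in> {a, b, c}" "y \<in> {a, b, c}"
    using assms e by (auto simp: edge_of_def)
  ultimately show ?thesis
    by (auto simp: insert_commute)
qed

lemma triangle_in_graph_triangles:
  assumes "{a, b, c} \<subseteq> V" "a \<noteq> b" "a \<noteq> c" "b \<noteq> c" "{a, b} \<in> E" "{a, c} \<in> E" "{b, c} \<in> E"
  shows "{a, b, c} \<in> graph_triangles E V"
  unfolding graph_triangles_def triangle_on_def
proof (intro CollectI conjI allI impI)
  show "{a, b, c} \<subseteq> V" "card {a, b, c} = 3"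
    using assms by simp_all
  fix e assume "edge_of e {a, b, c}"
  then show "e \<in> E"
    using edge_of_triple_cases assms(5-7) by metis
qed

locale closed_clique =
  fixes E :: "'a set set" and V X :: "'a set"
  assumes finite: "finite V"
    and graph: "\<forall>e\<in>E. e \<subseteq> V \<and> card e = 2"
    and subset: "X \<subseteq> V"
    and clique: "\<And>e. e \<subseteq> X \<Longrightarrow> card e = 2 \<Longrightarrow> e \<in> E"
    and closed: "\<And>S e. S \<in> graph_triangles E V \<Longrightarrow> e \<subseteq> X \<Longrightarrow> edge_of e S \<Longrightarrow> S \<subseteq> X"
begin

lemma outside_neighbour_unique:
  assumes "w \<in> V - X" "x1 \<in> X" "x2 \<in> X" "{x1, w} \<in> E" "{x2, w} \<in> E"
  shows "x1 = x2"
proof (rule ccontr)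
  assume ne: "x1 \<noteq> x2"
  have "{x1, x2} \<in> E"
    using ne assms(2,3) by (intro clique) auto
  with assms ne subset have "{x1, x2, w} \<in> graph_triangles E V"
    by (intro triangle_in_graph_triangles) auto
  moreover have "{x1, x2} \<subseteq> X"
    using assms(2,3) by simp
  moreover have "edge_of {x1, x2} {x1, x2, w}"
    using ne by (simp add: edge_of_def)
  ultimately have "{x1, x2, w} \<subseteq> X"
    by (rule closed)
  with assms(1) show False by simp
qed

definition crossing_edges :: "'a set set" where
  "crossing_edges = {e\<in>E. e \<inter> X \<noteq> {} \<and> \<not> e \<subseteq> X}"

lemma crossing_edge_obtain:
  assumes "e \<in> crossing_edges"
  obtains x w where "x \<in> X" "w \<in> V - X" "e = {x, w}" "e - X = {w}"
proof -
  have e: "e \<in> E" "e \<inter> X \<noteq> {}" "\<not> e \<subseteq> X"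
    using assms by (simp_all add: crossing_edges_def)
  have "card e = 2" "e \<subseteq> V"
    using graph e(1) by simp_all
  then obtain a b where ab: "e = {a, b}" "a \<in> V" "b \<in> V"
    by (auto simp: card_2_iff)
  consider "a \<in> X" "b \<notin> X" | "b \<in> X" "a \<notin> X"
    using e(2,3) ab(1) by blast
  then show ?thesis
  proof cases
    case 1
    then show ?thesis
      using that[of a b] ab by auto
  next
    case 2
    then show ?thesis
      using that[of b a] ab by (auto simp: insert_commute)
  qed
qed

lemma card_edges_le:
  "card E \<le> card {e\<in>E. e \<subseteq> V - X} + (card X choose 2) + card (V - X)"
proof -
  have finX: "finite X"
    using finite subset finite_subset by blast
  have "finite E"
    using graph finite by (auto intro: finite_subset[of _ "Pow V"])
  then have "card E \<le> card ({e\<in>E. e \<subseteq> V - X} \<union> {e\<in>E. e \<subseteq> X} \<union> crossing_edges)"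
    using graph by (intro card_mono) (auto simp: crossing_edges_def)
  also have "\<dots> \<le> card {e\<in>E. e \<subseteq> V - X} + card {e\<in>E. e \<subseteq> X} + card crossing_edges"
    by (meson card_Un_le add_right_mono order_trans)
  also have "card {e\<in>E. e \<subseteq> X} \<le> card X choose 2"
    using graph finX by (intro card_family_of_k_subsets_le) auto
  also have "card crossing_edges \<le> card (V - X)"
  proof -
    have "1 * card crossing_edges \<le> card (V - X)"
    proof (rule disjoint_family_card_le[where A = "\<lambda>e. e - X"])
      fix e assume "e \<in> crossing_edges"
      then obtain x w where "x \<in> X" "w \<in> V - X" "e = {x, w}" "e - X = {w}"
        by (rule crossing_edge_obtain)
      then show "e - X \<subseteq> V - X" "card (e - X) = 1"
        by simp_all
    next
      show "disjoint_family_on (\<lambda>e. e - X) crossing_edges"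
        unfolding disjoint_family_on_def
      proof (intro ballI impI, rule ccontr)
        fix e1 e2
        assume e: "e1 \<in> crossing_edges" "e2 \<in> crossing_edges" "e1 \<noteq> e2"
          "(e1 - X) \<inter> (e2 - X) \<noteq> {}"
        obtain x1 w where 1: "x1 \<in> X" "w \<in> V - X" "e1 = {x1, w}" "e1 - X = {w}"
          using e(1) by (rule crossing_edge_obtain)
        obtain x2 w2 where 2: "x2 \<in> X" "e2 = {x2, w2}" "e2 - X = {w2}"
          using e(2) by (rule crossing_edge_obtain)
        have "w2 = w"
          using e(4) 1(4) 2(3) by auto
        moreover have "e1 \<in> E" "e2 \<in> E"
          using e(1,2) by (simp_all add: crossing_edges_def)
        ultimately have "x1 = x2"
          using 1 2 outside_neighbour_unique by simp
        with e(3) 1 2 \<open>w2 = w\<close> show False by simp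
      qed
    qed (use finite in simp)
    then show ?thesis by simp
  qed
  finally show ?thesis by simp
qed

lemma card_triangles_le:
  assumes disj: "triangles_edge_disjoint E V"
  shows "2 * card (graph_triangles E V)
    \<le> 2 * card (graph_triangles {e\<in>E. e \<subseteq> V - X} (V - X)) + 2 * (card X choose 3) + card (V - X)"
proof -
  let ?T = "graph_triangles E V"
  define L where "L = {S\<in>?T. card (S \<inter> X) = 1}"
  have finX: "finite X"
    using finite subset finite_subset by blast
  have "?T \<subseteq> graph_triangles {e\<in>E. e \<subseteq> V - X} (V - X) \<union> {S\<in>?T. S \<subseteq> X} \<union> L"
  proof
    fix S assume S: "S \<in> ?T"
    then have "S \<subseteq> V" "finite (S \<inter> X)"
      using finX by (simp_all add: graph_triangles_def triangle_on_def)
    consider "card (S \<inter> X) = 0" | "card (S \<inter> X) = 1" | "2 \<le> card (S \<inter> X)"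
      by linarith
    then show "S \<in> graph_triangles {e\<in>E. e \<subseteq> V - X} (V - X) \<union> {S\<in>?T. S \<subseteq> X} \<union> L"
    proof cases
      case 1
      then have "S \<subseteq> V - X"
        using \<open>S \<subseteq> V\<close> \<open>finite (S \<inter> X)\<close> by auto
      then show ?thesis
        using S graph_triangles_restrict[of "V - X" V E] by blast
    next
      case 2
      then show ?thesis
        using S by (simp add: L_def)
    next
      case 3
      then obtain e where "e \<subseteq> S \<inter> X" "card e = 2"
        by (rule obtain_subset_with_card_n)
      then have "S \<subseteq> X"
        using closed[OF S, of e] by (simp add: edge_of_def)
      then show ?thesis
        using S by simp
    qed
  qed
  then have "card ?T \<le>
      card (graph_triangles {e\<in>E. e \<subseteq> V - X} (V - X) \<union> {S\<in>?T. S \<subseteq> X} \<union> L)"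
    using finite by (intro card_mono) (simp_all add: finite_graph_triangles L_def)
  also have "\<dots> \<le>
      card (graph_triangles {e\<in>E. e \<subseteq> V - X} (V - X)) + card {S\<in>?T. S \<subseteq> X} + card L"
    by (meson card_Un_le add_right_mono order_trans)
  also have "card {S\<in>?T. S \<subseteq> X} \<le> card X choose 3"
    using finX by (intro card_family_of_k_subsets_le) (auto simp: graph_triangles_def triangle_on_def)
  finally have "2 * card ?T \<le>
      2 * card (graph_triangles {e\<in>E. e \<subseteq> V - X} (V - X)) + 2 * (card X choose 3) + 2 * card L"
    by simp
  moreover have "2 * card L \<le> card (V - X)"
  proof (rule disjoint_family_card_le[where A = "\<lambda>S. S - X"])
    fix S assume "S \<in> L"
    then have "S \<subseteq> V" "card S = 3" "card (S \<inter> X) = 1"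
      by (simp_all add: L_def graph_triangles_def triangle_on_def)
    moreover have "finite (S \<inter> X)"
      using \<open>card (S \<inter> X) = 1\<close> by (simp add: card_ge_0_finite)
    ultimately show "S - X \<subseteq> V - X" "card (S - X) = 2"
      by (auto simp: card_Diff_subset_Int)
  next
    show "disjoint_family_on (\<lambda>S. S - X) L"
      unfolding disjoint_family_on_def
    proof (intro ballI impI, rule ccontr)
      fix S1 S2
      assume S: "S1 \<in> L" "S2 \<in> L" "S1 \<noteq> S2" "(S1 - X) \<inter> (S2 - X) \<noteq> {}"
      then obtain w where w: "w \<in> S1 - X" "w \<in> S2 - X"
        by blast
      obtain x1 x2 where x: "S1 \<inter> X = {x1}" "S2 \<inter> X = {x2}"
        using S(1,2) by (auto simp: L_def card_1_singleton_iff)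
      have T: "S1 \<in> ?T" "S2 \<in> ?T"
        using S(1,2) by (simp_all add: L_def)
      have E: "{x1, w} \<in> E" "{x2, w} \<in> E"
        using graph_triangles_edge[OF T(1), of x1 w] graph_triangles_edge[OF T(2), of x2 w] x w
        by auto
      have "w \<in> V - X"
        using T(1) w(1) by (auto simp: graph_triangles_def triangle_on_def)
      then have "x1 = x2"
        using x E by (intro outside_neighbour_unique) auto
      moreover have "{x1, w} \<subseteq> S1" "{x2, w} \<subseteq> S2"
        using x w by auto
      ultimately have "S1 = S2"
        using disj E(1) T unfolding triangles_edge_disjoint_def by auto
      with S(3) show False ..
    qed
  qed (use finite in simp)
  ultimately show ?thesis
    by linarith
qed

end

theorem card_edges_triangles_le:
  assumes "finite V" "\<forall>e\<in>E. e \<subseteq> V \<and> card e = 2" "triangles_edge_disjoint E V"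
  shows "4 * (card E + card (graph_triangles E V)) \<le> card V ^ 2 + 4 * card V"
  using assms
proof (induction "card V" arbitrary: V E rule: less_induct)
  case less
  note finite = less.prems(1) and graph = less.prems(2) and disj = less.prems(3)
  have IH: "4 * (card {e\<in>E. e \<subseteq> V - X} + card (graph_triangles {e\<in>E. e \<subseteq> V - X} (V - X)))
      \<le> card (V - X) ^ 2 + 4 * card (V - X)" if "X \<subseteq> V" "X \<noteq> {}" for X
  proof (rule less.hyps)
    show "card (V - X) < card V"
      using that finite by (intro psubset_card_mono) auto
    show "triangles_edge_disjoint {e\<in>E. e \<subseteq> V - X} (V - X)"
      using disj by (rule triangles_edge_disjoint_restrict) blast
  qed (use finite graph in auto)
  consider (triangle) X where "X \<in> graph_triangles E V"
    | (edge) X where "X \<in> E" "graph_triangles E V = {}"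
    | (empty) "E = {}" "graph_triangles E V = {}"
    by blast
  then show ?case
  proof cases
    case triangle
    then have X: "X \<subseteq> V" "card X = 3" "X \<noteq> {}"
      by (auto simp: graph_triangles_def triangle_on_def)
    interpret closed_clique E V X
    proof
      show "e \<in> E" if "e \<subseteq> X" "card e = 2" for e
        using triangle that by (simp add: graph_triangles_def edge_of_def)
      then show "S \<subseteq> X" if "S \<in> graph_triangles E V" "e \<subseteq> X" "edge_of e S" for S e
        using disj triangle that unfolding triangles_edge_disjoint_def edge_of_def by blast
    qed (use finite graph X in auto)
    define m where "m = card (V - X)"
    have "card V = m + 3"
      using X finite card_mono[OF finite X(1)] by (simp add: m_def card_Diff_subset finite_subset)
    then have "card V ^ 2 + 4 * card V = m ^ 2 + 10 * m + 21"
      by (simp add: power2_eq_square algebra_simps)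
    moreover have "card E \<le> card {e\<in>E. e \<subseteq> V - X} + 3 + m"
      using card_edges_le X by (simp add: m_def choose_two)
    moreover have "2 * card (graph_triangles E V)
        \<le> 2 * card (graph_triangles {e\<in>E. e \<subseteq> V - X} (V - X)) + 2 + m"
      using card_triangles_le[OF disj] X by (simp add: m_def)
    ultimately show ?thesis
      using IH[OF X(1,3)] unfolding m_def by simp
  next
    case edge
    then have X: "X \<subseteq> V" "card X = 2" "X \<noteq> {}"
      using graph by auto
    interpret closed_clique E V X
    proof
      show "e \<in> E" if "e \<subseteq> X" "card e = 2" for e
        using edge X that by (metis card_subset_eq card.infinite zero_neq_numeral)
    qed (use finite graph X edge in auto)
    define m where "m = card (V - X)"
    have "card V = m + 2"
      using X finite card_mono[OF finite X(1)] by (simp add: m_def card_Diff_subset finite_subset)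
    then have "card V ^ 2 + 4 * card V = m ^ 2 + 8 * m + 12"
      by (simp add: power2_eq_square algebra_simps)
    moreover have "card E \<le> card {e\<in>E. e \<subseteq> V - X} + 1 + m"
      using card_edges_le X by (simp add: m_def)
    ultimately show ?thesis
      using IH[OF X(1,3)] edge(2) unfolding m_def by simp
  next
    case empty
    then show ?thesis
      by simp
  qed
qed

definition private_edges :: "'a set multiset \<Rightarrow> 'a set \<Rightarrow> 'a set set" where
  "private_edges T S = {e. edge_of e S \<and> (\<forall>S'\<in>#T. e \<subseteq> S' \<longrightarrow> S' = S)}"

definition private_graph :: "'a set multiset \<Rightarrow> 'a set set" where
  "private_graph T = (\<Union>S\<in>set_mset T. private_edges T S)"

lemma edge_of_card_3E:
  assumes "card S = 3" "edge_of e S"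
  obtains a b c where "a \<noteq> b" "b \<noteq> c" "a \<noteq> c" "S = {a, b, c}" "e = {a, b}"
proof -
  have e: "e \<subseteq> S" "card e = 2"
    using assms(2) by (simp_all add: edge_of_def)
  then obtain a b where ab: "e = {a, b}" "a \<noteq> b"
    by (meson card_2_iff)
  have "card (S - e) = 1"
    using assms(1) e by (simp add: card_Diff_subset finite_subset card_ge_0_finite)
  then obtain c where c: "S - e = {c}"
    by (auto simp: card_Suc_eq)
  have "S = e \<union> (S - e)"
    using e(1) by blast
  also have "\<dots> = {a, b, c}"
    using ab(1) c by auto
  finally have "S = {a, b, c}" .
  moreover have "c \<notin> e"
    using c by blast
  ultimately show thesis
    using that[of a b c] ab by auto
qed

lemma two_edges_of_card_3E:
  assumes "card S = 3" "edge_of e1 S" "edge_of e2 S" "e1 \<noteq> e2"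
  obtains a b c where "a \<noteq> b" "b \<noteq> c" "a \<noteq> c" "S = {a, b, c}" "e1 = {a, b}" "e2 = {b, c}"
proof -
  obtain a b c where abc: "a \<noteq> b" "b \<noteq> c" "a \<noteq> c" "S = {a, b, c}" "e1 = {a, b}"
    using assms(1,2) by (rule edge_of_card_3E)
  then have "e2 = {a, c} \<or> e2 = {b, c}"
    using edge_of_triple_cases[of e2 a b c] assms(3,4) by auto
  then show thesis
  proof
    assume "e2 = {a, c}"
    with abc that[of b a c] show thesis
      by (simp add: insert_commute)
  next
    assume "e2 = {b, c}"
    with abc that show thesis
      by blast
  qed
qed

lemma card_edges_of_card_3:
  assumes "card S = 3"
  shows "card {e. edge_of e S} = 3"
proof -
  have "finite S"
    using assms by (simp add: card_ge_0_finite)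
  then show ?thesis
    using n_subsets[of S 2] assms by (simp add: edge_of_def choose_two)
qed

locale rainbow_free =
  fixes V :: "'a set" and T :: "'a set multiset"
  assumes triangles: "\<forall>t\<in>#T. triangle_on V t"
    and no_rainbow: "\<not> has_rainbow_triangle V T"
begin

lemma memberD:
  assumes "S \<in># T"
  shows "S \<subseteq> V" "card S = 3"
  using triangles assms by (simp_all add: triangle_on_def)

lemma member_eq_if_subset:
  assumes "A \<in># T" "S \<subseteq> A" "card S = 3"
  shows "S = A"
  using assms memberD(2)[OF assms(1)] by (simp add: card_subset_eq card_ge_0_finite)

lemma no_rainbow_cover:
  assumes "{#A, B, C#} \<subseteq># T" "a \<noteq> b" "b \<noteq> c" "a \<noteq> c" "{a, b, c} \<subseteq> V"
    and "{a, b} \<subseteq> A" "{b, c} \<subseteq> B" "{a, c} \<subseteq> C"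
  shows False
proof -
  have "triangle_on V {a, b, c}"
    using assms(2-5) by (simp add: triangle_on_def)
  moreover have "edge_of {a, b} A" "edge_of {b, c} B" "edge_of {a, c} C"
    using assms(2-4,6-8) by (simp_all add: edge_of_def)
  ultimately have "has_rainbow_triangle V T"
    using assms(1) unfolding has_rainbow_triangle_def by blast
  with no_rainbow show False ..
qed

lemma count_le_2: "count T S \<le> 2"
proof (rule ccontr)
  assume "\<not> count T S \<le> 2"
  then have S: "{#S, S, S#} \<subseteq># T"
    by (auto simp: subseteq_mset_def)
  then have "S \<in># T"
    by (rule mset_subset_eqD) simp
  obtain a b c where abc: "a \<noteq> b" "b \<noteq> c" "a \<noteq> c" "S = {a, b, c}"
    using memberD(2)[OF \<open>S \<in># T\<close>] by (auto simp: card_3_iff)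
  show False
    by (rule no_rainbow_cover[OF S abc(1-3)])
      (use memberD(1)[OF \<open>S \<in># T\<close>] in \<open>simp_all add: abc(4)\<close>)
qed

lemma private_edge_if_count_ge_2:
  assumes "count T S \<ge> 2" "edge_of e S"
  shows "e \<in> private_edges T S"
proof (rule ccontr)
  assume "e \<notin> private_edges T S"
  then obtain A where A: "A \<in># T" "e \<subseteq> A" "A \<noteq> S"
    using assms(2) unfolding private_edges_def by blast
  have "{#A, S, S#} \<subseteq># T"
    using A assms(1) by (auto simp: subseteq_mset_def)
  then have S: "S \<in># T"
    by (rule mset_subset_eqD) simp
  obtain a b c where abc: "a \<noteq> b" "b \<noteq> c" "a \<noteq> c" "S = {a, b, c}" "e = {a, b}"
    using memberD(2)[OF S] assms(2) by (rule edge_of_card_3E)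
  show False
    by (rule no_rainbow_cover[OF \<open>{#A, S, S#} \<subseteq># T\<close> abc(1-3)])
      (use A memberD(1)[OF S] in \<open>simp_all add: abc(4,5)\<close>)
qed

lemma non_private_edge_unique:
  assumes S: "S \<in># T" and "edge_of e1 S" "edge_of e2 S"
    and "e1 \<notin> private_edges T S" "e2 \<notin> private_edges T S"
  shows "e1 = e2"
proof (rule ccontr)
  assume "e1 \<noteq> e2"
  obtain a b c where abc: "a \<noteq> b" "b \<noteq> c" "a \<noteq> c" "S = {a, b, c}" "e1 = {a, b}" "e2 = {b, c}"
    using memberD(2)[OF S] assms(2,3) \<open>e1 \<noteq> e2\<close> by (rule two_edges_of_card_3E)
  obtain A where A: "A \<in># T" "e1 \<subseteq> A" "A \<noteq> S"
    using assms(2,4) unfolding private_edges_def by blast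
  obtain B where B: "B \<in># T" "e2 \<subseteq> B" "B \<noteq> S"
    using assms(3,5) unfolding private_edges_def by blast
  have "A \<noteq> B"
  proof
    assume "A = B"
    then have "S \<subseteq> A"
      using A(2) B(2) abc by auto
    then have "S = A"
      using A(1) memberD(2)[OF S] by (intro member_eq_if_subset)
    with A(3) show False
      by simp
  qed
  then have "{#A, B, S#} \<subseteq># T"
    using A B S by (auto simp: subseteq_mset_def)
  then show False
    by (rule no_rainbow_cover[OF _ abc(1-3)])
      (use A B memberD(1)[OF S] in \<open>simp_all add: abc(4-6)\<close>)
qed

lemma member_if_edges_covered:
  assumes S: "triangle_on V S" and covered: "\<And>e. edge_of e S \<Longrightarrow> \<exists>A\<in>#T. e \<subseteq> A"
  shows "S \<in># T"
proof -
  obtain a b c where abc: "a \<noteq> b" "b \<noteq> c" "a \<noteq> c" "S = {a, b, c}"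
    using S by (auto simp: triangle_on_def card_3_iff)
  have "edge_of {a, b} S" "edge_of {b, c} S" "edge_of {a, c} S"
    using abc by (simp_all add: edge_of_def)
  then obtain A B C where ABC: "A \<in># T" "{a, b} \<subseteq> A" "B \<in># T" "{b, c} \<subseteq> B"
      "C \<in># T" "{a, c} \<subseteq> C"
    using covered by meson
  have "\<exists>D\<in>#T. S \<subseteq> D"
  proof (rule ccontr)
    assume "\<not> (\<exists>D\<in>#T. S \<subseteq> D)"
    then have "A \<noteq> B" "B \<noteq> C" "A \<noteq> C"
      using ABC abc(4) by auto
    with ABC have "{#A, B, C#} \<subseteq># T"
      by (auto simp: subseteq_mset_def)
    then show False
      by (rule no_rainbow_cover[OF _ abc(1-3)])
        (use S ABC in \<open>simp_all add: abc(4) triangle_on_def\<close>)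
  qed
  then obtain D where "D \<in># T" "S \<subseteq> D"
    by blast
  moreover have "card S = 3"
    using S by (simp add: triangle_on_def)
  ultimately show ?thesis
    using member_eq_if_subset by blast
qed

lemma private_edges_subset: "private_edges T S \<subseteq> {e. edge_of e S}"
  by (auto simp: private_edges_def)

lemma private_graph_edges: "\<forall>e\<in>private_graph T. e \<subseteq> V \<and> card e = 2"
  using memberD(1) by (fastforce simp: private_graph_def private_edges_def edge_of_def)

lemma graph_triangles_private_graph:
  "graph_triangles (private_graph T) V = {S \<in> set_mset T. private_edges T S = {e. edge_of e S}}"
proof (intro equalityI subsetI)
  fix S assume S: "S \<in> graph_triangles (private_graph T) V"
  have owner: "\<exists>A\<in>#T. e \<in> private_edges T A" if "edge_of e S" for e
    using S that by (auto simp: graph_triangles_def private_graph_def)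
  have "S \<in># T"
  proof (rule member_if_edges_covered)
    show "triangle_on V S"
      using S by (simp add: graph_triangles_def)
    show "\<exists>A\<in>#T. e \<subseteq> A" if "edge_of e S" for e
      using owner[OF that] by (auto simp: private_edges_def edge_of_def)
  qed
  moreover have "e \<in> private_edges T S" if e: "edge_of e S" for e
  proof -
    obtain A where "A \<in># T" "e \<in> private_edges T A"
      using owner[OF e] by blast
    moreover have "S = A"
      using calculation \<open>S \<in># T\<close> e by (auto simp: private_edges_def edge_of_def)
    ultimately show ?thesis
      by simp
  qed
  ultimately show "S \<in> {S \<in> set_mset T. private_edges T S = {e. edge_of e S}}"
    using private_edges_subset by blast
next
  fix S assume "S \<in> {S \<in> set_mset T. private_edges T S = {e. edge_of e S}}"
  then have S: "S \<in># T" "private_edges T S = {e. edge_of e S}"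
    by simp_all
  show "S \<in> graph_triangles (private_graph T) V"
    unfolding graph_triangles_def
  proof (intro CollectI conjI allI impI)
    show "triangle_on V S"
      using triangles S(1) by blast
    fix e assume "edge_of e S"
    then have "e \<in> private_edges T S"
      using S(2) by simp
    then show "e \<in> private_graph T"
      using S(1) unfolding private_graph_def by blast
  qed
qed

lemma triangles_edge_disjoint_private_graph: "triangles_edge_disjoint (private_graph T) V"
  unfolding triangles_edge_disjoint_def
proof (intro ballI impI)
  fix e S1 S2
  assume e: "e \<in> private_graph T"
    and S: "S1 \<in> graph_triangles (private_graph T) V" "S2 \<in> graph_triangles (private_graph T) V"
    and sub: "e \<subseteq> S1" "e \<subseteq> S2"
  obtain A where "e \<in> private_edges T A"
    using e unfolding private_graph_def by blast
  moreover have "S1 \<in># T" "S2 \<in># T"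
    using S unfolding graph_triangles_private_graph by simp_all
  ultimately have "S1 = A" "S2 = A"
    using sub unfolding private_edges_def by blast+
  then show "S1 = S2"
    by simp
qed

lemma twice_count_le:
  assumes S: "S \<in># T"
  shows "2 * count T S
    \<le> card (private_edges T S) + (if private_edges T S = {e. edge_of e S} then 1 else 0)"
proof -
  have edges: "card {e. edge_of e S} = 3" "finite {e. edge_of e S}"
    using card_edges_of_card_3[OF memberD(2)[OF S]] by (simp_all add: card_ge_0_finite)
  show ?thesis
  proof (cases "private_edges T S = {e. edge_of e S}")
    case True
    then show ?thesis
      using count_le_2[of S] edges by simp
  next
    case False
    then obtain e0 where e0: "edge_of e0 S" "e0 \<notin> private_edges T S"
      using private_edges_subset by blast
    have "count T S \<le> 1"
      using private_edge_if_count_ge_2[OF _ e0(1)] e0(2) by fastforce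
    have "{e. edge_of e S} - private_edges T S \<subseteq> {e0}"
      using non_private_edge_unique[OF S _ e0(1) _ e0(2)] by blast
    then have "card ({e. edge_of e S} - private_edges T S) \<le> 1"
      using card_mono[of "{e0}"] by fastforce
    then have "2 \<le> card (private_edges T S)"
      using edges card_Diff_subset[OF finite_subset[OF private_edges_subset] private_edges_subset]
        card_mono[OF edges(2) private_edges_subset] by simp
    with \<open>count T S \<le> 1\<close> False show ?thesis
      by simp
  qed
qed

lemma twice_size_le:
  "2 * size T \<le> card (private_graph T) + card (graph_triangles (private_graph T) V)"
proof -
  let ?full = "\<lambda>S. private_edges T S = {e. edge_of e S}"
  have "finite (private_edges T S)" if "S \<in># T" for S
    using card_edges_of_card_3[OF memberD(2)[OF that]] private_edges_subset[of S]
    by (metis card.infinite finite_subset zero_neq_numeral)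
  moreover have "private_edges T S1 \<inter> private_edges T S2 = {}"
    if "S1 \<in># T" "S2 \<in># T" "S1 \<noteq> S2" for S1 S2
    using that by (auto simp: private_edges_def edge_of_def)
  ultimately have edges: "card (private_graph T) = (\<Sum>S\<in>set_mset T. card (private_edges T S))"
    unfolding private_graph_def by (intro card_UN_disjoint) auto
  have "card (graph_triangles (private_graph T) V) = card {S \<in> set_mset T. ?full S}"
    by (simp add: graph_triangles_private_graph)
  also have "\<dots> = (\<Sum>S\<in>set_mset T. if ?full S then 1 else 0)"
    by (simp add: sum.inter_filter[symmetric])
  finally have triangles: "card (graph_triangles (private_graph T) V) = \<dots>" .
  have "2 * size T = (\<Sum>S\<in>set_mset T. 2 * count T S)"
    by (simp add: size_multiset_overloaded_eq sum_distrib_left)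
  also have "\<dots> \<le> (\<Sum>S\<in>set_mset T. card (private_edges T S) + (if ?full S then 1 else 0))"
    by (intro sum_mono twice_count_le) simp
  also have "\<dots> = card (private_graph T) + card (graph_triangles (private_graph T) V)"
    by (simp add: edges triangles sum.distrib)
  finally show ?thesis .
qed

lemma size_le:
  assumes "finite V"
  shows "8 * size T \<le> card V ^ 2 + 4 * card V"
proof -
  have "8 * size T \<le> 4 * (card (private_graph T) + card (graph_triangles (private_graph T) V))"
    using twice_size_le by simp
  also have "\<dots> \<le> card V ^ 2 + 4 * card V"
    using assms private_graph_edges triangles_edge_disjoint_private_graph
    by (rule card_edges_triangles_le)
  finally show ?thesis .
qed

end

lemma square_plus_linear_le:
  fixes \<epsilon> :: real
  assumes "\<epsilon> > 0" "4 / \<epsilon> \<le> x"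
  shows "x ^ 2 + 4 * x \<le> (1 + \<epsilon>) * x ^ 2"
proof -
  have "4 \<le> \<epsilon> * x"
    using assms by (simp add: pos_divide_le_eq mult.commute)
  moreover have "x \<ge> 0"
    using assms(2) order_trans[of 0 "4 / \<epsilon>"] assms(1) by simp
  ultimately have "4 * x \<le> \<epsilon> * x * x"
    by (simp add: mult_right_mono)
  then show ?thesis
    by (simp add: power2_eq_square algebra_simps)
qed

theorem theorem3p1:
  shows "\<forall>\<epsilon>::real. \<epsilon> > 0 \<longrightarrow> (\<exists>N::nat. \<forall>n\<ge>N. \<forall>(V::nat set) (T::nat set multiset).
     finite V \<and> card V = n \<and> (\<forall>t\<in>#T. triangle_on V t) \<and> \<not> has_rainbow_triangle V T
       \<longrightarrow> real (size T) \<le> (1 + \<epsilon>) * (real n)^2 / 8)"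
proof (intro allI impI)
  fix \<epsilon> :: real
  assume "\<epsilon> > 0"
  show "\<exists>N::nat. \<forall>n\<ge>N. \<forall>(V::nat set) (T::nat set multiset).
     finite V \<and> card V = n \<and> (\<forall>t\<in>#T. triangle_on V t) \<and> \<not> has_rainbow_triangle V T
       \<longrightarrow> real (size T) \<le> (1 + \<epsilon>) * (real n)^2 / 8"
  proof (intro exI[of _ "nat \<lceil>4 / \<epsilon>\<rceil>"] allI impI)
    fix n V and T :: "nat set multiset"
    assume n: "nat \<lceil>4 / \<epsilon>\<rceil> \<le> n"
      and H: "finite V \<and> card V = n \<and> (\<forall>t\<in>#T. triangle_on V t) \<and> \<not> has_rainbow_triangle V T"
    then have "rainbow_free V T"
      by (simp add: rainbow_free_def)
    then have "real (8 * size T) \<le> real (n ^ 2 + 4 * n)"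
      using H rainbow_free.size_le of_nat_mono by blast
    moreover have "4 / \<epsilon> \<le> real n"
      using n real_nat_ceiling_ge[of "4 / \<epsilon>"] by linarith
    ultimately show "real (size T) \<le> (1 + \<epsilon>) * (real n)^2 / 8"
      using square_plus_linear_le[OF \<open>\<epsilon> > 0\<close>] by fastforce
  qed
qed

end
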